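(* Let $b\ge2$, $\ell\ge1$, $m=b^{\ell+1}$. For $\operatorname{Re}(s)>1$, \[ F^{\circ}(s)+\sum_{\substack{p\le m\\ p\nmid b}}\frac{S^{\circ}(p)}{p^{s}}=\sum_{\substack{\chi\bmod m\\ \chi(-1)=-1}}\hat{S}^{\circ}(\chi)\,P(s,\chi),\qquad P(s,\chi)=\sum_{p}\frac{\chi(p)}{p^s}, \] and every character appearing on the right is non-principal; in particular the decomposition of $F^{\circ}$ over characters modulo $m$ contains no term proportional to $\sum_p p^{-s}$ (no Mertens term).
   Context: The collision deviation $S_\ell(p)$ is a real-valued invariant of primes $p$ with $\gcd(p,b)=1$, introduced in a companion paper; it depends only on $p\bmod m$, $m=b^{\ell+1}$, so it is regarded as a function $S$ on $(\mathbb{Z}/m\mathbb{Z})^{\times}$. It satisfies the reflection identity $S(a)+S(m-a)=-1$ for every unit $a$ mod $m$ (established in the companion paper, taken as given). The spectral class of a unit $a$ is $R(a)=(a-1)\bmod b$; $\overline{S}_R$ is the average of $S$ over units with spectral class $R$; the centered collision deviation is $S^{\circ}(a)=S(a)-\overline{S}_{R(a)}$, $S^{\circ}(p)=S^{\circ}(p\bmod m)$, and $\hat{S}^{\circ}(\chi)=\frac{1}{\phi(m)}\sum_a S^{\circ}(a)\overline{\chi}(a)$. Finally $F^{\circ}(s)=\sum_{p>m,\ \gcd(p,b)=1}S^{\circ}(p)p^{-s}$. *)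

theory Defs
  imports "HOL-Analysis.Analysis" "HOL-Number_Theory.Number_Theory"
begin

definition dirichlet_char :: "nat \<Rightarrow> (int \<Rightarrow> complex) \<Rightarrow> bool" where
  "dirichlet_char m chi \<longleftrightarrow>
     (\<forall>x y. chi (x * y) = chi x * chi y) \<and>
     (\<forall>x. chi (x + int m) = chi x) \<and>
     (\<forall>x. chi x = 0 \<longleftrightarrow> \<not> coprime x (int m))"

definition principal_char :: "nat \<Rightarrow> int \<Rightarrow> complex" where
  "principal_char m x = (if coprime x (int m) then 1 else 0)"

text \<open>Units of Z/mZ, represented by their least nonnegative residues.\<close>
definition units_mod :: "nat \<Rightarrow> nat set" where
  "units_mod m = {a. a < m \<and> coprime a m}"

definition spec_class :: "nat \<Rightarrow> nat \<Rightarrow> nat" where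
  "spec_class b a = (a - 1) mod b"

definition Sbar :: "nat \<Rightarrow> nat \<Rightarrow> (nat \<Rightarrow> real) \<Rightarrow> nat \<Rightarrow> real" where
  "Sbar b m S R =
     (\<Sum>a\<in>{a \<in> units_mod m. spec_class b a = R}. S a) /
       real (card {a \<in> units_mod m. spec_class b a = R})"

definition Scirc :: "nat \<Rightarrow> nat \<Rightarrow> (nat \<Rightarrow> real) \<Rightarrow> nat \<Rightarrow> real" where
  "Scirc b m S a = S a - Sbar b m S (spec_class b a)"

definition Shat :: "nat \<Rightarrow> nat \<Rightarrow> (nat \<Rightarrow> real) \<Rightarrow> (int \<Rightarrow> complex) \<Rightarrow> complex" where
  "Shat b m S chi = (1 / of_nat (totient m)) *
     (\<Sum>a\<in>units_mod m. complex_of_real (Scirc b m S a) * cnj (chi (int a)))"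

definition Fcirc :: "nat \<Rightarrow> nat \<Rightarrow> (nat \<Rightarrow> real) \<Rightarrow> complex \<Rightarrow> complex" where
  "Fcirc b m S s = infsum (\<lambda>p. complex_of_real (Scirc b m S (p mod m)) * of_nat p powr (- s))
     {p. prime p \<and> p > m \<and> coprime p b}"

definition Pchi :: "complex \<Rightarrow> (int \<Rightarrow> complex) \<Rightarrow> complex" where
  "Pchi s chi = infsum (\<lambda>p. chi (int p) * of_nat p powr (- s)) {p::nat. prime p}"

end

theory Submission
  imports Defs
begin

(* For a unit r mod m, Fourier inversion on (Z/mZ)^* gives S_circ(r) = sum over all
   characters chi of Shat(chi) chi(r).  This needs the group of Dirichlet characters to have
   phi(m) elements, i.e. enough characters to separate units, which are built by the usual
   step-by-step extension of characters of a finite abelian group.  The reflection identity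
   makes S_circ odd: a |-> m - a permutes each pair of spectral classes R(a), R(m - a), so the
   class averages satisfy Sbar(R(m - a)) = -1 - Sbar(R(a)) and S_circ(m - a) = -S_circ(a).
   Hence Shat vanishes on even characters, and in particular on the principal one.  Weighting
   by p^-s and summing over primes, absolute convergence for Re s > 1 lets the finite sum over
   characters be exchanged with the sum over primes; the primes dividing b contribute nothing
   and the remaining ones split into p > m and p <= m. *)

section \<open>Characters of finite abelian groups\<close>

definition char_on :: "('a, 'b) monoid_scheme \<Rightarrow> 'a set \<Rightarrow> ('a \<Rightarrow> complex) \<Rightarrow> bool" where
  "char_on G H f \<longleftrightarrow>
     (\<forall>x\<in>H. \<forall>y\<in>H. f (x \<otimes>\<^bsub>G\<^esub> y) = f x * f y) \<and> (\<forall>x\<in>H. f x \<noteq> 0)"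

lemma (in monoid) submonoid_pow_closed:
  "submonoid H G \<Longrightarrow> x \<in> H \<Longrightarrow> x [^] (k::nat) \<in> H"
  by (induction k) (auto simp: submonoid_def)

lemma (in group) finite_submonoid_inv_closed:
  assumes fin: "finite (carrier G)" and H: "submonoid H G" and x: "x \<in> H"
  shows "inv x \<in> H"
proof -
  have xG: "x \<in> carrier G" using H x by (rule submonoid.mem_carrier)
  have "order G > 0" using fin by (simp add: order_gt_0_iff_finite)
  then have "x [^] (order G - 1) \<otimes> x = \<one>"
    using pow_order_eq_1[OF xG] by (metis Suc_diff_1 nat_pow_Suc)
  then have "inv x = x [^] (order G - 1)"
    using xG by (intro inv_equality) auto
  then show ?thesis using submonoid_pow_closed[OF H x] by simp
qed

lemma (in monoid) char_on_one:
  assumes "submonoid H G" "char_on G H f" shows "f \<one> = 1"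
proof -
  have "f \<one> = f \<one> * f \<one>" "f \<one> \<noteq> 0"
    using assms unfolding char_on_def submonoid_def by (metis l_one subsetD)+
  then show ?thesis by (metis mult_cancel_left1)
qed

lemma (in monoid) char_on_pow:
  assumes H: "submonoid H G" and f: "char_on G H f" and x: "x \<in> H"
  shows "f (x [^] (k::nat)) = f x ^ k"
proof (induction k)
  case 0 show ?case using char_on_one[OF H f] by simp
next
  case (Suc k)
  have "x [^] k \<in> H" using submonoid_pow_closed[OF H x] .
  then show ?case using Suc x f by (simp add: char_on_def)
qed

(* For n least with g^n in H, every n-th root c of f(g^n) is a consistent value at g. *)

locale char_extension = comm_group +
  fixes H :: "'a set" and f :: "'a \<Rightarrow> complex" and g :: 'a and n :: nat and c :: complex
  assumes finite_carrier: "finite (carrier G)"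
    and submonoid: "submonoid H G" and char: "char_on G H f"
    and g_carrier: "g \<in> carrier G"
    and n_pos: "0 < n" and pow_n_mem: "g [^] n \<in> H"
    and pow_less_not_mem: "\<And>k. 0 < k \<Longrightarrow> k < n \<Longrightarrow> g [^] k \<notin> H"
    and root: "c ^ n = f (g [^] n)"
begin

lemma H_carrier: "x \<in> H \<Longrightarrow> x \<in> carrier G"
  using submonoid by (rule submonoid.mem_carrier)

lemma H_m_closed: "x \<in> H \<Longrightarrow> y \<in> H \<Longrightarrow> x \<otimes> y \<in> H"
  using submonoid by (rule submonoid.m_closed)

lemma inv_mem: "x \<in> H \<Longrightarrow> inv x \<in> H"
  using finite_carrier submonoid by (rule finite_submonoid_inv_closed)

lemma char_mult: "x \<in> H \<Longrightarrow> y \<in> H \<Longrightarrow> f (x \<otimes> y) = f x * f y"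
  using char unfolding char_on_def by blast

lemma char_nonzero: "x \<in> H \<Longrightarrow> f x \<noteq> 0"
  using char unfolding char_on_def by blast

lemma pow_mem_imp_dvd:
  assumes "g [^] d \<in> H" shows "n dvd d"
proof -
  define q r where "q = d div n" and "r = d mod n"
  have gnq: "(g [^] n) [^] q \<in> H" using submonoid_pow_closed[OF submonoid pow_n_mem] .
  have "g [^] d = (g [^] n) [^] q \<otimes> g [^] r"
    using g_carrier by (simp add: nat_pow_pow nat_pow_mult q_def r_def)
  then have "g [^] r = inv ((g [^] n) [^] q) \<otimes> g [^] d"
    using g_carrier gnq H_carrier by (simp add: inv_solve_left)
  then have "g [^] r \<in> H" using H_m_closed[OF inv_mem[OF gnq] assms] by simp
  moreover have "r < n" using n_pos by (simp add: r_def)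
  ultimately have "r = 0" using pow_less_not_mem by blast
  then show ?thesis by (simp add: r_def mod_eq_0_iff_dvd)
qed

lemma char_pow_g:
  assumes "g [^] d \<in> H" shows "f (g [^] d) = c ^ d"
proof -
  obtain q where d: "d = n * q" using pow_mem_imp_dvd[OF assms] by blast
  have "f (g [^] d) = f ((g [^] n) [^] q)" using g_carrier by (simp add: d nat_pow_pow)
  also have "\<dots> = (c ^ n) ^ q" using char_on_pow[OF submonoid char pow_n_mem] root by simp
  finally show ?thesis by (simp add: d power_mult)
qed

lemma extension_well_defined_le:
  assumes x: "x \<in> H" and y: "y \<in> H" and eq: "x \<otimes> g [^] k = y \<otimes> g [^] l" and "l \<le> k"
  shows "f x * c ^ k = f y * c ^ l"
proof -
  have xG: "x \<in> carrier G" and yG: "y \<in> carrier G" using x y H_carrier by auto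
  have "x \<otimes> g [^] (k - l) \<otimes> g [^] l = y \<otimes> g [^] l"
    using eq g_carrier xG \<open>l \<le> k\<close> by (simp add: m_assoc nat_pow_mult)
  then have "x \<otimes> g [^] (k - l) = y" using g_carrier xG yG by simp
  then have y_eq: "y = x \<otimes> g [^] (k - l)" and "g [^] (k - l) = inv x \<otimes> y"
    using g_carrier xG yG by (auto simp: inv_solve_left)
  then have "g [^] (k - l) \<in> H" using H_m_closed[OF inv_mem[OF x] y] by simp
  then have "f y = f x * c ^ (k - l)" using y_eq char_mult[OF x] char_pow_g by simp
  then show ?thesis using \<open>l \<le> k\<close> by (simp add: mult.assoc power_add[symmetric])
qed

lemma extension_well_defined:
  assumes "x \<in> H" "y \<in> H" "x \<otimes> g [^] k = y \<otimes> g [^] l"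
  shows "f x * c ^ k = f y * c ^ l"
  using extension_well_defined_le[OF assms] extension_well_defined_le[OF assms(2,1) assms(3)[symmetric]]
  by (cases "l \<le> k") auto

definition extended_submonoid :: "'a set" where
  "extended_submonoid = {x \<otimes> g [^] (k::nat) | x k. x \<in> H}"

definition extended_char :: "'a \<Rightarrow> complex" where
  "extended_char z = (SOME v. \<exists>x\<in>H. \<exists>k::nat. z = x \<otimes> g [^] k \<and> v = f x * c ^ k)"

lemma extended_char_eq: "x \<in> H \<Longrightarrow> extended_char (x \<otimes> g [^] k) = f x * c ^ k"
proof -
  assume x: "x \<in> H"
  have "\<exists>y\<in>H. \<exists>l::nat. x \<otimes> g [^] k = y \<otimes> g [^] l
           \<and> extended_char (x \<otimes> g [^] k) = f y * c ^ l"
    unfolding extended_char_def by (rule someI_ex) (use x in blast)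
  then show ?thesis using extension_well_defined[OF x] by metis
qed

lemma extended_mult:
  assumes "x \<in> H" "y \<in> H"
  shows "(x \<otimes> g [^] k) \<otimes> (y \<otimes> g [^] l) = (x \<otimes> y) \<otimes> g [^] (k + l :: nat)"
proof -
  have G: "x \<in> carrier G" "y \<in> carrier G" "g [^] k \<in> carrier G" "g [^] l \<in> carrier G"
    using assms H_carrier g_carrier by auto
  have "(x \<otimes> g [^] k) \<otimes> (y \<otimes> g [^] l) = x \<otimes> (g [^] k \<otimes> y) \<otimes> g [^] l"
    using G by (simp add: m_assoc)
  also have "g [^] k \<otimes> y = y \<otimes> g [^] k" using G by (simp add: m_comm)
  finally show ?thesis using G g_carrier by (simp add: m_assoc nat_pow_mult)
qed

lemma submonoid_extended_submonoid: "submonoid extended_submonoid G"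
proof
  show "extended_submonoid \<subseteq> carrier G" using g_carrier H_carrier by (auto simp: extended_submonoid_def)
  show "\<one> \<in> extended_submonoid"
  proof -
    have "\<one> = \<one> \<otimes> g [^] (0::nat)" by simp
    then show ?thesis unfolding extended_submonoid_def using submonoid.one_closed[OF submonoid] by blast
  qed
  show "z \<otimes> w \<in> extended_submonoid" if "z \<in> extended_submonoid" "w \<in> extended_submonoid" for z w
    using that extended_mult H_m_closed unfolding extended_submonoid_def by blast
qed

lemma char_on_extended_char: "char_on G extended_submonoid extended_char"
proof -
  have "c \<noteq> 0" using root zero_power[OF n_pos] char_nonzero[OF pow_n_mem] by metis
  then show ?thesis
    unfolding char_on_def extended_submonoid_def
    by (auto simp: extended_mult extended_char_eq H_m_closed char_mult char_nonzero power_add)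
qed

lemma extended_submonoid_contains: "H \<subseteq> extended_submonoid" "g \<in> extended_submonoid"
proof -
  show "H \<subseteq> extended_submonoid" unfolding extended_submonoid_def using H_carrier by (force intro: exI[of _ 0])
  have "g = \<one> \<otimes> g [^] (1::nat)" using g_carrier by simp
  then show "g \<in> extended_submonoid"
    unfolding extended_submonoid_def using submonoid.one_closed[OF submonoid] by blast
qed

lemma extended_char_extends: "x \<in> H \<Longrightarrow> extended_char x = f x" "extended_char g = c"
proof -
  show "x \<in> H \<Longrightarrow> extended_char x = f x" using extended_char_eq[of x 0] H_carrier by simp
  have "extended_char (\<one> \<otimes> g [^] (1::nat)) = c"
    using extended_char_eq[OF submonoid.one_closed[OF submonoid], of 1] char_on_one[OF submonoid char]
    by (simp del: nat_pow_Suc)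
  moreover have "\<one> \<otimes> g [^] (1::nat) = g" using g_carrier by simp
  ultimately show "extended_char g = c" by simp
qed

end

lemma (in group) obtain_least_pow_mem:
  assumes "finite (carrier G)" "submonoid H G" "g \<in> carrier G"
  obtains n :: nat where "0 < n" "g [^] n \<in> H" "\<And>k. 0 < k \<Longrightarrow> k < n \<Longrightarrow> g [^] k \<notin> H"
proof -
  have "0 < order G \<and> g [^] order G \<in> H"
    using assms pow_order_eq_1 submonoid.one_closed by (simp add: order_gt_0_iff_finite)
  then have "\<exists>n::nat. 0 < n \<and> g [^] n \<in> H" by blast
  define n where "n = (LEAST n::nat. 0 < n \<and> g [^] n \<in> H)"
  have "0 < n \<and> g [^] n \<in> H" unfolding n_def by (rule LeastI_ex) fact
  moreover have "g [^] k \<notin> H" if "0 < k" "k < n" for k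
    using not_less_Least[of k "\<lambda>n::nat. 0 < n \<and> g [^] n \<in> H"] that unfolding n_def by blast
  ultimately show ?thesis using that by blast
qed

lemma (in comm_group) char_on_extend:
  assumes "finite (carrier G)" "submonoid H G" "char_on G H f" "g \<in> carrier G"
    and "0 < n" "g [^] n \<in> H" "\<And>k. 0 < k \<Longrightarrow> k < n \<Longrightarrow> g [^] k \<notin> H"
    and "c ^ n = f (g [^] n)"
  shows "\<exists>H' f'. submonoid H' G \<and> char_on G H' f' \<and> H \<subseteq> H' \<and> g \<in> H'
           \<and> (\<forall>x\<in>H. f' x = f x) \<and> f' g = c"
proof -
  interpret char_extension G H f g n c
    using assms by (intro char_extension.intro char_extension_axioms.intro comm_group_axioms)
  show ?thesis
    using submonoid_extended_submonoid char_on_extended_char extended_submonoid_contains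
      extended_char_extends by blast
qed

lemma (in comm_group) char_on_extend_to_carrier:
  assumes fin: "finite (carrier G)" and H: "submonoid H G" and f: "char_on G H f"
  shows "\<exists>f'. char_on G (carrier G) f' \<and> (\<forall>x\<in>H. f' x = f x)"
proof -
  have "\<exists>H' f'. submonoid H' G \<and> char_on G H' f' \<and> H \<union> A \<subseteq> H' \<and> (\<forall>x\<in>H. f' x = f x)"
    if "A \<subseteq> carrier G" for A
    using finite_subset[OF that fin] that
  proof (induction A rule: finite_induct)
    case empty
    have "H \<union> {} \<subseteq> H" by simp
    with H f show ?case by blast
  next
    case (insert g A)
    from insert.IH insert.prems obtain H' f' where H': "submonoid H' G" "char_on G H' f'" "H \<union> A \<subseteq> H'"
      and agree: "\<forall>x\<in>H. f' x = f x" by auto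
    have g: "g \<in> carrier G" using insert.prems by simp
    obtain n :: nat where n: "0 < n" "g [^] n \<in> H'" "\<And>k. 0 < k \<Longrightarrow> k < n \<Longrightarrow> g [^] k \<notin> H'"
      using obtain_least_pow_mem[OF fin H'(1) g] by blast
    have "f' (g [^] n) \<noteq> 0" using H'(2) n(2) unfolding char_on_def by blast
    then have "card {c. c ^ n = f' (g [^] n)} > 0" using n(1) by (simp add: card_nth_roots)
    then obtain c where "c ^ n = f' (g [^] n)" by (auto simp: card_gt_0_iff)
    then obtain H'' f'' where H'': "submonoid H'' G" "char_on G H'' f''" "H' \<subseteq> H''" "g \<in> H''"
        and agree': "\<forall>x\<in>H'. f'' x = f' x"
      using char_on_extend[OF fin H'(1,2) g n] by blast
    have "H \<union> insert g A \<subseteq> H''" using H'(3) H''(3,4) by blast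
    moreover have "\<forall>x\<in>H. f'' x = f x" using agree agree' H'(3) by auto
    ultimately show ?case using H''(1,2) by blast
  qed
  then obtain H' f' where H': "submonoid H' G" "char_on G H' f'" "H \<union> carrier G \<subseteq> H'"
      and agree: "\<forall>x\<in>H. f' x = f x"
    by (meson order_refl)
  have "H' = carrier G" using H'(3) submonoid.subset[OF H'(1)] by blast
  then show ?thesis using H'(2) agree by blast
qed

lemma (in comm_group) char_on_separates:
  assumes fin: "finite (carrier G)" and x: "x \<in> carrier G" "x \<noteq> \<one>"
  shows "\<exists>f. char_on G (carrier G) f \<and> f x \<noteq> 1"
proof -
  have H: "submonoid {\<one>} G" by (rule submonoid.intro) auto
  have f: "char_on G {\<one>} (\<lambda>_. 1)" by (simp add: char_on_def)
  obtain n :: nat where n: "0 < n" "x [^] n \<in> {\<one>}" "\<And>k. 0 < k \<Longrightarrow> k < n \<Longrightarrow> x [^] k \<notin> {\<one>}"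
    using obtain_least_pow_mem[OF fin H x(1)] by blast
  have "n \<noteq> 1" using n(2) x by auto
  have "\<not> {c::complex. c ^ n = 1} \<subseteq> {1}"
  proof
    assume "{c::complex. c ^ n = 1} \<subseteq> {1}"
    then have "card {c::complex. c ^ n = 1} \<le> card {1::complex}" by (intro card_mono) auto
    then show False using card_roots_unity_eq[OF n(1)] n(1) \<open>n \<noteq> 1\<close> by simp
  qed
  then obtain c :: complex where c: "c ^ n = 1" "c \<noteq> 1" by blast
  have "\<exists>H' f'. submonoid H' G \<and> char_on G H' f' \<and> {\<one>} \<subseteq> H' \<and> x \<in> H'
          \<and> (\<forall>y\<in>{\<one>}. f' y = 1) \<and> f' x = c"
    using c(1) by (intro char_on_extend[OF fin H f x(1) n]) simp
  then obtain H' f' where H': "submonoid H' G" "char_on G H' f'" "x \<in> H'" "f' x = c"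
    by blast
  obtain f'' where "char_on G (carrier G) f''" "f'' x = f' x"
    using char_on_extend_to_carrier[OF fin H'(1,2)] H'(3) by blast
  then show ?thesis using H'(4) c(2) by auto
qed


section \<open>Dirichlet characters\<close>

context
  fixes m :: nat and chi :: "int \<Rightarrow> complex"
  assumes chi: "dirichlet_char m chi"
begin

lemma dirichlet_char_mult: "chi (x * y) = chi x * chi y"
  using chi unfolding dirichlet_char_def by blast

lemma dirichlet_char_eq_0_iff: "chi x = 0 \<longleftrightarrow> \<not> coprime x (int m)"
  using chi unfolding dirichlet_char_def by blast

lemma dirichlet_char_add_mult: "chi (x + int m * k) = chi x"
proof (induction k rule: int_induct[where k = 0])
  case (step1 i)
  have "chi (x + int m * (i + 1)) = chi ((x + int m * i) + int m)" by (simp add: algebra_simps)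
  then show ?case using chi step1 unfolding dirichlet_char_def by simp
next
  case (step2 i)
  have "chi (x + int m * i) = chi ((x + int m * (i - 1)) + int m)" by (simp add: algebra_simps)
  then show ?case using chi step2 unfolding dirichlet_char_def by simp
qed simp

lemma dirichlet_char_cong: "[x = y] (mod int m) \<Longrightarrow> chi x = chi y"
proof -
  assume "[x = y] (mod int m)"
  then obtain k where "y = x + int m * k" unfolding cong_iff_lin by blast
  then show ?thesis by (simp add: dirichlet_char_add_mult)
qed

lemma dirichlet_char_nat_mod: "chi (int (a mod m)) = chi (int a)"
  by (rule dirichlet_char_cong) (simp add: cong_def zmod_int)

lemma dirichlet_char_1: "chi 1 = 1"
proof -
  have "chi 1 = chi 1 * chi 1" "chi 1 \<noteq> 0"
    using dirichlet_char_mult[of 1 1] dirichlet_char_eq_0_iff[of 1] by simp_all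
  then show ?thesis by (metis mult_cancel_left1)
qed

lemma dirichlet_char_power: "chi (x ^ k) = chi x ^ k"
  by (induction k) (simp_all add: dirichlet_char_1 dirichlet_char_mult)

lemma dirichlet_char_minus_1: "chi (-1) = 1 \<or> chi (-1) = -1"
proof -
  have "chi (-1) ^ 2 = 1" using dirichlet_char_power[of "-1" 2] dirichlet_char_1 by simp
  then show ?thesis by (simp add: power2_eq_1_iff)
qed

context
  assumes m: "m > 0"
begin

lemma dirichlet_char_power_totient:
  assumes "coprime x (int m)" shows "chi x ^ totient m = 1"
proof -
  define a where "a = nat (x mod int m)"
  have a: "[x = int a] (mod int m)" using m by (simp add: a_def cong_def)
  then have "coprime (int a) (int m)" using assms cong_imp_coprime by blast
  then have "[a ^ totient m = 1] (mod m)" by (intro euler_theorem) simp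
  then have "[int a ^ totient m = 1] (mod int m)" by (metis cong_int_iff of_nat_1 of_nat_power)
  then have "[x ^ totient m = 1] (mod int m)" using cong_pow[OF a] cong_trans by blast
  then show ?thesis using dirichlet_char_cong dirichlet_char_power dirichlet_char_1 by metis
qed

lemma norm_dirichlet_char: "coprime x (int m) \<Longrightarrow> norm (chi x) = 1"
proof -
  assume "coprime x (int m)"
  then have "chi x ^ totient m = 1" by (rule dirichlet_char_power_totient)
  then show ?thesis using power_eq_1_iff m by fastforce
qed

lemma norm_dirichlet_char_le_1: "norm (chi x) \<le> 1"
proof (cases "coprime x (int m)")
  case False
  then have "chi x = 0" using dirichlet_char_eq_0_iff by blast
  then show ?thesis by simp
qed (simp add: norm_dirichlet_char)

lemma cnj_dirichlet_char_mult_self: "coprime x (int m) \<Longrightarrow> cnj (chi x) * chi x = 1"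
  using norm_dirichlet_char complex_norm_square[of "chi x"] by (simp add: mult.commute)

end

end

lemma dirichlet_char_mult_closed:
  "dirichlet_char m chi \<Longrightarrow> dirichlet_char m psi \<Longrightarrow> dirichlet_char m (\<lambda>x. chi x * psi x)"
  unfolding dirichlet_char_def by (auto simp: algebra_simps)

lemma dirichlet_char_cnj: "dirichlet_char m chi \<Longrightarrow> dirichlet_char m (\<lambda>x. cnj (chi x))"
  unfolding dirichlet_char_def by auto

lemma dirichlet_char_principal: "dirichlet_char m (principal_char m)"
proof -
  have "coprime (x + int m) (int m) \<longleftrightarrow> coprime x (int m)" for x
    by (simp add: coprime_iff_gcd_eq_1)
  then show ?thesis unfolding dirichlet_char_def principal_char_def by simp
qed

lemma finite_dirichlet_chars:
  assumes m: "m > 0" shows "finite {chi. dirichlet_char m chi}"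
proof -
  define V where "V = insert 0 {z::complex. z ^ totient m = 1}"
  have "finite V" unfolding V_def using m by (simp add: finite_roots_unity Suc_le_eq)
  then have "finite (PiE {0..<m} (\<lambda>_. V))" by (simp add: finite_PiE)
  moreover have "(\<lambda>chi. restrict (\<lambda>k. chi (int k)) {0..<m}) ` {chi. dirichlet_char m chi}
                   \<subseteq> PiE {0..<m} (\<lambda>_. V)"
  proof clarify
    fix chi assume chi: "dirichlet_char m chi"
    have "chi (int k) \<in> V" for k
      using dirichlet_char_power_totient[OF chi m] dirichlet_char_eq_0_iff[OF chi]
      by (cases "coprime (int k) (int m)") (auto simp: V_def)
    then show "restrict (\<lambda>k. chi (int k)) {0..<m} \<in> PiE {0..<m} (\<lambda>_. V)" by auto
  qed
  moreover have "inj_on (\<lambda>chi. restrict (\<lambda>k. chi (int k)) {0..<m}) {chi. dirichlet_char m chi}"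
  proof (rule inj_onI, rule ext)
    fix chi psi x
    assume chars: "chi \<in> {chi. dirichlet_char m chi}" "psi \<in> {chi. dirichlet_char m chi}"
      and eq: "restrict (\<lambda>k. chi (int k)) {0..<m} = restrict (\<lambda>k. psi (int k)) {0..<m}"
    define k where "k = nat (x mod int m)"
    have "k < m" "[x = int k] (mod int m)" using m by (auto simp: k_def cong_def nat_less_iff)
    then have "chi x = chi (int k)" "psi x = psi (int k)"
      using chars dirichlet_char_cong[of m _ x "int k"] by auto
    then show "chi x = psi x" using fun_cong[OF eq, of k] \<open>k < m\<close> by simp
  qed
  ultimately show ?thesis by (meson finite_imageD finite_subset)
qed

lemma exists_dirichlet_char_ne_1:
  assumes m: "m > 1" and x: "coprime x (int m)" "\<not> [x = 1] (mod int m)"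
  shows "\<exists>chi. dirichlet_char m chi \<and> chi x \<noteq> 1"
proof -
  interpret R: residues "int m" "residue_ring (int m)" by unfold_locales (use m in simp)
  define G where "G = units_of (residue_ring (int m))"
  interpret G: comm_group G unfolding G_def by (rule R.units_comm_group)
  have carrier: "carrier G = {y. 0 < y \<and> y < int m \<and> coprime y (int m)}"
    unfolding G_def units_of_carrier by (rule R.res_units_eq)
  have mult: "y \<otimes>\<^bsub>G\<^esub> z = (y * z) mod int m" for y z
    unfolding G_def units_of_mult by (rule R.res_mult_eq)
  have fin: "finite (carrier G)" unfolding carrier by (rule finite_subset[of _ "{0..<int m}"]) auto
  have mod_in: "y mod int m \<in> carrier G" if "coprime y (int m)" for y
  proof -
    have "coprime (y mod int m) (int m)" using that m by simp
    moreover from this have "y mod int m \<noteq> 0" using m by auto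
    moreover have "0 \<le> y mod int m" "y mod int m < int m" using m by simp_all
    ultimately show ?thesis unfolding carrier by simp
  qed
  have "x mod int m \<noteq> \<one>\<^bsub>G\<^esub>"
    using x(2) m unfolding G_def units_of_one R.res_one_eq by (simp add: cong_def)
  then obtain f where f: "char_on G (carrier G) f" "f (x mod int m) \<noteq> 1"
    using G.char_on_separates[OF fin mod_in[OF x(1)]] by blast
  define chi where "chi y = (if coprime y (int m) then f (y mod int m) else 0)" for y
  have "dirichlet_char m chi"
    unfolding dirichlet_char_def
  proof (intro conjI allI)
    fix y z :: int
    show "chi (y * z) = chi y * chi z"
    proof (cases "coprime y (int m) \<and> coprime z (int m)")
      case True
      then have "f (y * z mod int m) = f ((y mod int m) \<otimes>\<^bsub>G\<^esub> (z mod int m))"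
        by (simp add: mult mod_mult_eq)
      also have "\<dots> = f (y mod int m) * f (z mod int m)"
        using f(1) mod_in True unfolding char_on_def by blast
      finally show ?thesis using True by (simp add: chi_def)
    qed (auto simp: chi_def)
  next
    fix y :: int
    have "coprime (y + int m) (int m) \<longleftrightarrow> coprime y (int m)" by (simp add: coprime_iff_gcd_eq_1)
    then show "chi (y + int m) = chi y" by (simp add: chi_def)
    show "chi y = 0 \<longleftrightarrow> \<not> coprime y (int m)"
      using f(1) mod_in unfolding chi_def char_on_def by auto
  qed
  moreover have "chi x = f (x mod int m)" using x(1) by (simp add: chi_def)
  ultimately show ?thesis using f(2) by auto
qed

lemma sum_dirichlet_chars:
  assumes m: "m > 1" and x: "coprime x (int m)"
  shows "(\<Sum>chi | dirichlet_char m chi. chi x)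
           = (if [x = 1] (mod int m) then of_nat (card {chi. dirichlet_char m chi}) else 0)"
proof (cases "[x = 1] (mod int m)")
  case True
  then have "(\<Sum>chi | dirichlet_char m chi. chi x) = (\<Sum>chi | dirichlet_char m chi. 1)"
    by (intro sum.cong refl) (simp add: dirichlet_char_cong dirichlet_char_1)
  then show ?thesis using True by simp
next
  case False
  define D where "D = {chi. dirichlet_char m chi}"
  obtain chi0 where chi0: "dirichlet_char m chi0" "chi0 x \<noteq> 1"
    using exists_dirichlet_char_ne_1[OF m x False] by blast
  have cancel: "cnj (chi0 y) * (chi0 y * chi y) = chi y" if "chi \<in> D" for chi y
    using that cnj_dirichlet_char_mult_self[OF chi0(1)] m dirichlet_char_eq_0_iff[of m chi y]
    by (cases "coprime y (int m)") (auto simp: D_def mult.assoc[symmetric])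
  have "(\<Sum>chi\<in>D. chi x) = (\<Sum>chi\<in>D. chi0 x * chi x)"
    by (rule sum.reindex_bij_witness[where j = "\<lambda>chi y. cnj (chi0 y) * chi y"
          and i = "\<lambda>chi y. chi0 y * chi y"])
      (use cancel chi0(1) in \<open>auto simp: D_def dirichlet_char_mult_closed dirichlet_char_cnj
         mult.left_commute\<close>)
  also have "\<dots> = chi0 x * (\<Sum>chi\<in>D. chi x)" by (simp add: sum_distrib_left)
  finally show ?thesis using chi0(2) False by (simp add: D_def mult_cancel_right1)
qed

lemma finite_units_mod [simp]: "finite (units_mod m)"
  unfolding units_mod_def by simp

lemma units_mod_bounds:
  assumes m: "m > 1" and a: "a \<in> units_mod m"
  shows "0 < a" "a < m"
proof -
  have "coprime a m" "a < m" using a by (auto simp: units_mod_def)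
  moreover have "a \<noteq> 0" using \<open>coprime a m\<close> m by (intro notI) simp
  ultimately show "0 < a" "a < m" by simp_all
qed

lemma units_mod_eq_totatives:
  assumes m: "m > 1" shows "units_mod m = totatives m"
proof (rule equalityI; rule subsetI)
  fix x assume x: "x \<in> units_mod m"
  then have "coprime x m" by (simp add: units_mod_def)
  with units_mod_bounds[OF m x] show "x \<in> totatives m" by (simp add: totatives_def)
next
  fix x assume "x \<in> totatives m"
  then have "0 < x" "x \<le> m" "coprime x m" by (auto simp: totatives_def)
  moreover have "x \<noteq> m" using \<open>coprime x m\<close> m by (intro notI) simp
  ultimately show "x \<in> units_mod m" by (simp add: units_mod_def)
qed

lemma card_units_mod: "m > 1 \<Longrightarrow> card (units_mod m) = totient m"
  by (simp add: units_mod_eq_totatives totient_def)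

lemma one_in_units_mod: "m > 1 \<Longrightarrow> 1 \<in> units_mod m"
  unfolding units_mod_def by simp

lemma bij_betw_mult_units_mod:
  assumes v: "coprime v m"
  shows "bij_betw (\<lambda>u. v * u mod m) (units_mod m) (units_mod m)"
proof -
  have into: "(\<lambda>u. v * u mod m) ` units_mod m \<subseteq> units_mod m"
    using v by (auto simp: units_mod_def)
  have "inj_on (\<lambda>u. v * u mod m) (units_mod m)"
  proof (rule inj_onI)
    fix x y assume "x \<in> units_mod m" "y \<in> units_mod m" "v * x mod m = v * y mod m"
    then show "x = y"
      using v cong_mult_lcancel_nat[of v m x y] by (simp add: units_mod_def cong_def)
  qed
  then show ?thesis using endo_inj_surj[OF finite_units_mod into] by (simp add: bij_betw_def)
qed

lemma diff_in_units_mod: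
  assumes m: "m > 1" and a: "a \<in> units_mod m"
  shows "m - a \<in> units_mod m"
proof -
  have "gcd (m - a) m = gcd a m"
    using gcd_diff2_nat[of a m] units_mod_bounds[OF m a] by linarith
  moreover have "coprime a m" using a by (simp add: units_mod_def)
  ultimately have "coprime (m - a) m" unfolding coprime_iff_gcd_eq_1 by (rule trans)
  then show ?thesis using units_mod_bounds[OF m a] by (simp add: units_mod_def)
qed

lemma bij_betw_diff_units_mod:
  "m > 1 \<Longrightarrow> bij_betw (\<lambda>a. m - a) (units_mod m) (units_mod m)"
  by (rule bij_betw_byWitness[where f' = "\<lambda>a. m - a"])
    (auto simp: diff_in_units_mod, auto simp: units_mod_def)

lemma sum_units_mod_dirichlet_char:
  assumes m: "m > 1" and chi: "dirichlet_char m chi"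
  shows "(\<Sum>a\<in>units_mod m. chi (int a))
           = (if chi = principal_char m then of_nat (totient m) else 0)"
proof (cases "chi = principal_char m")
  case True
  then have "(\<Sum>a\<in>units_mod m. chi (int a)) = (\<Sum>a\<in>units_mod m. 1)"
    by (intro sum.cong refl) (simp add: principal_char_def units_mod_def)
  then show ?thesis using True card_units_mod[OF m] by simp
next
  case False
  then obtain x where "chi x \<noteq> principal_char m x" by blast
  then have x: "coprime x (int m)" "chi x \<noteq> 1"
    using dirichlet_char_eq_0_iff[OF chi] by (auto simp: principal_char_def split: if_splits)
  define v where "v = nat (x mod int m)"
  have v: "[x = int v] (mod int m)" using m by (simp add: v_def cong_def)
  then have chi_v: "chi (int v) = chi x" using dirichlet_char_cong[OF chi] by simp
  have "coprime (int v) (int m)" using cong_imp_coprime[OF v x(1)] .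
  then have "coprime v m" by simp
  have "(\<Sum>a\<in>units_mod m. chi (int a)) = (\<Sum>a\<in>units_mod m. chi (int (v * a mod m)))"
    by (rule sum.reindex_bij_betw[OF bij_betw_mult_units_mod[OF \<open>coprime v m\<close>], symmetric])
  also have "\<dots> = chi x * (\<Sum>a\<in>units_mod m. chi (int a))"
    by (simp add: dirichlet_char_nat_mod[OF chi] dirichlet_char_mult[OF chi] chi_v
        sum_distrib_left)
  finally show ?thesis using x(2) False by (simp add: mult_cancel_right1)
qed

lemma card_dirichlet_chars:
  assumes m: "m > 1" shows "card {chi. dirichlet_char m chi} = totient m"
proof -
  define D where "D = {chi. dirichlet_char m chi}"
  have "(\<Sum>a\<in>units_mod m. \<Sum>chi\<in>D. chi (int a))
          = (\<Sum>a\<in>units_mod m. if a = 1 then of_nat (card D) else 0)"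
  proof (rule sum.cong[OF refl])
    fix a assume a: "a \<in> units_mod m"
    then have "[int a = 1] (mod int m) \<longleftrightarrow> a = 1"
      using m by (auto simp: units_mod_def cong_def zmod_int[symmetric])
    then show "(\<Sum>chi\<in>D. chi (int a)) = (if a = 1 then of_nat (card D) else 0)"
      using sum_dirichlet_chars[OF m, of "int a"] a by (simp add: D_def units_mod_def)
  qed
  also have "\<dots> = of_nat (card D)" using one_in_units_mod[OF m] by simp
  finally have "of_nat (card D) = (\<Sum>chi\<in>D. \<Sum>a\<in>units_mod m. chi (int a))"
    by (simp add: sum.swap[of _ D])
  also have "\<dots> = (\<Sum>chi\<in>D. if chi = principal_char m then of_nat (totient m) else 0)"
    using sum_units_mod_dirichlet_char[OF m] by (simp add: D_def)
  also have "\<dots> = of_nat (totient m)"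
    using finite_dirichlet_chars m dirichlet_char_principal by (simp add: D_def)
  finally show ?thesis by (simp add: D_def)
qed

lemma dirichlet_char_orthogonality:
  assumes m: "m > 1" and a: "a \<in> units_mod m" and r: "r \<in> units_mod m"
  shows "(\<Sum>chi | dirichlet_char m chi. cnj (chi (int a)) * chi (int r))
           = (if a = r then of_nat (totient m) else 0)"
proof -
  define t where "t = totient m"
  define w where "w = a ^ (t - 1) * r"
  have t: "t > 0" using m by (simp add: t_def)
  have ca: "coprime a m" and cr: "coprime r m" using a r by (auto simp: units_mod_def)
  have euler: "[a * a ^ (t - 1) = 1] (mod m)"
    using euler_theorem[OF ca] t by (simp add: t_def power_Suc[symmetric])
  have "cnj (chi (int a)) * chi (int r) = chi (int w)" if chi: "dirichlet_char m chi" for chi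
  proof -
    have "[int (a * a ^ (t - 1)) = int 1] (mod int m)" using euler cong_int_iff by blast
    then have "chi (int (a * a ^ (t - 1))) = chi 1" using dirichlet_char_cong[OF chi] by simp
    then have inv: "chi (int a) * chi (int a) ^ (t - 1) = 1"
      by (simp add: dirichlet_char_mult[OF chi] dirichlet_char_power[OF chi] dirichlet_char_1[OF chi])
    have "cnj (chi (int a)) * chi (int a) = 1"
      using cnj_dirichlet_char_mult_self[OF chi] m ca by simp
    then have "cnj (chi (int a)) = cnj (chi (int a)) * (chi (int a) * chi (int a) ^ (t - 1))"
      using inv by simp
    also have "\<dots> = chi (int a) ^ (t - 1)"
      using \<open>cnj (chi (int a)) * chi (int a) = 1\<close> by (simp add: mult.assoc[symmetric])
    finally have "cnj (chi (int a)) = chi (int a) ^ (t - 1)" .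
    then show ?thesis
      by (simp add: w_def dirichlet_char_mult[OF chi] dirichlet_char_power[OF chi])
  qed
  then have "(\<Sum>chi | dirichlet_char m chi. cnj (chi (int a)) * chi (int r))
               = (\<Sum>chi | dirichlet_char m chi. chi (int w))" by simp
  also have "\<dots> = (if [w = 1] (mod m) then of_nat t else 0)"
  proof -
    have "coprime (int w) (int m)" using ca cr by (simp add: w_def)
    moreover have "[int w = 1] (mod int m) \<longleftrightarrow> [w = 1] (mod m)"
      using cong_int_iff[of w 1 m] by simp
    ultimately show ?thesis
      using sum_dirichlet_chars[OF m, of "int w"] card_dirichlet_chars[OF m] by (simp add: t_def)
  qed
  also have "[w = 1] (mod m) \<longleftrightarrow> a = r"
  proof
    assume "[w = 1] (mod m)"
    then have "[a * w = a] (mod m)" using cong_scalar_left[of w 1 m a] by simp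
    moreover have "[a * w = r] (mod m)"
      using cong_scalar_right[OF euler, of r] by (simp add: w_def mult.assoc)
    ultimately show "a = r" using a r by (auto simp: units_mod_def cong_def)
  next
    assume "a = r"
    then show "[w = 1] (mod m)" using euler by (simp add: w_def mult.commute)
  qed
  finally show ?thesis by (simp add: t_def)
qed


section \<open>Reflection symmetry of the centred collision deviation\<close>

lemma spec_class_eq_iff:
  assumes "1 \<le> x" "1 \<le> y"
  shows "spec_class b x = spec_class b y \<longleftrightarrow> [x = y] (mod b)"
proof -
  have "spec_class b x = spec_class b y \<longleftrightarrow> [x - 1 + 1 = y - 1 + 1] (mod b)"
    unfolding spec_class_def cong_add_rcancel_nat by (simp add: cong_def)
  then show ?thesis using assms by simp
qed

lemma cong_diff_left_iff_nat:
  fixes m x y b :: nat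
  assumes "x \<le> m" "y \<le> m"
  shows "[m - x = m - y] (mod b) \<longleftrightarrow> [x = y] (mod b)"
proof -
  have "[m - x = m - y] (mod b) \<longleftrightarrow> [(m - x) + (x + y) = (m - y) + (x + y)] (mod b)"
    by (rule cong_add_rcancel_nat[symmetric])
  also have "\<dots> \<longleftrightarrow> [m + y = m + x] (mod b)" using assms by (simp add: add.assoc[symmetric])
  also have "\<dots> \<longleftrightarrow> [y = x] (mod b)" by (rule cong_add_lcancel_nat)
  finally show ?thesis by (simp add: cong_sym_eq)
qed

lemma spec_class_diff_eq_iff:
  assumes m: "m > 1" and x: "x \<in> units_mod m" and y: "y \<in> units_mod m"
  shows "spec_class b (m - x) = spec_class b (m - y) \<longleftrightarrow> spec_class b x = spec_class b y"
  using units_mod_bounds[OF m x] units_mod_bounds[OF m y]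
    units_mod_bounds[OF m diff_in_units_mod[OF m x]] units_mod_bounds[OF m diff_in_units_mod[OF m y]]
  by (simp add: spec_class_eq_iff cong_diff_left_iff_nat)

lemma Shat_inversion:
  assumes m: "m > 1" and r: "r \<in> units_mod m"
  shows "(\<Sum>chi | dirichlet_char m chi. Shat b m S chi * chi (int r))
           = complex_of_real (Scirc b m S r)"
proof -
  define t :: complex where "t = of_nat (totient m)"
  have "(\<Sum>chi | dirichlet_char m chi. Shat b m S chi * chi (int r))
          = (\<Sum>a\<in>units_mod m. complex_of_real (Scirc b m S a) / t *
               (\<Sum>chi | dirichlet_char m chi. cnj (chi (int a)) * chi (int r)))"
    unfolding Shat_def t_def
    by (simp add: sum_distrib_left sum_distrib_right sum.swap[of _ "Collect (dirichlet_char m)"]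
        mult_ac)
  also have "\<dots> = (\<Sum>a\<in>units_mod m. if a = r then complex_of_real (Scirc b m S a) else 0)"
    using m by (intro sum.cong refl) (simp add: dirichlet_char_orthogonality r t_def)
  also have "\<dots> = complex_of_real (Scirc b m S r)" using r by simp
  finally show ?thesis .
qed

context
  fixes b m :: nat and S :: "nat \<Rightarrow> real"
  assumes m: "m > 1"
    and reflection: "\<And>a. a \<in> units_mod m \<Longrightarrow> S a + S (m - a) = -1"
begin

lemma Sbar_reflect:
  assumes a: "a \<in> units_mod m"
  shows "Sbar b m S (spec_class b (m - a)) = -1 - Sbar b m S (spec_class b a)"
proof -
  define C where "C R = {x \<in> units_mod m. spec_class b x = R}" for R
  have bij: "bij_betw (\<lambda>x. m - x) (units_mod m) (units_mod m)"
    using bij_betw_diff_units_mod[OF m] .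
  have "C (spec_class b (m - a)) = (\<lambda>x. m - x) ` C (spec_class b a)"
  proof (rule Set.set_eqI)
    fix y
    have "y \<in> C (spec_class b (m - a)) \<longleftrightarrow> y \<in> units_mod m \<and> m - y \<in> C (spec_class b a)"
      using spec_class_diff_eq_iff[OF m _ a, of "m - y"] diff_in_units_mod[OF m]
        units_mod_bounds[OF m] by (auto simp: C_def diff_diff_cancel less_imp_le)
    also have "\<dots> \<longleftrightarrow> y \<in> (\<lambda>x. m - x) ` C (spec_class b a)"
      using units_mod_bounds[OF m] diff_in_units_mod[OF m]
      by (auto simp: C_def image_iff diff_diff_cancel less_imp_le intro!: bexI[of _ "m - y"])
    finally show "y \<in> C (spec_class b (m - a)) \<longleftrightarrow> y \<in> (\<lambda>x. m - x) ` C (spec_class b a)" .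
  qed
  moreover have inj: "inj_on (\<lambda>x. m - x) (C (spec_class b a))"
    using bij unfolding bij_betw_def C_def by (auto intro: inj_on_subset)
  ultimately have card: "card (C (spec_class b (m - a))) = card (C (spec_class b a))"
    and sum: "(\<Sum>x\<in>C (spec_class b (m - a)). S x) = (\<Sum>x\<in>C (spec_class b a). S (m - x))"
    by (simp_all add: card_image sum.reindex)
  have "(\<Sum>x\<in>C (spec_class b a). S (m - x)) = (\<Sum>x\<in>C (spec_class b a). -1 - S x)"
    using reflection by (intro sum.cong refl) (simp add: C_def eq_diff_eq add.commute)
  moreover have "card (C (spec_class b a)) > 0"
    using a by (auto simp: C_def card_gt_0_iff)
  ultimately show ?thesis
    using card sum unfolding Sbar_def C_def[symmetric]
    by (simp add: sum_subtractf field_simps)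
qed

lemma Scirc_reflect: "a \<in> units_mod m \<Longrightarrow> Scirc b m S (m - a) = - Scirc b m S a"
  using reflection[of a] Sbar_reflect[of a] unfolding Scirc_def by simp

lemma Shat_even_eq_0:
  assumes chi: "dirichlet_char m chi" and even: "chi (-1) = 1"
  shows "Shat b m S chi = 0"
proof -
  define X where "X = (\<Sum>a\<in>units_mod m. complex_of_real (Scirc b m S a) * cnj (chi (int a)))"
  have "chi (int (m - a)) = chi (int a)" if "a \<in> units_mod m" for a
  proof -
    have "[int (m - a) = (-1) * int a] (mod int m)"
      unfolding cong_iff_lin using units_mod_bounds[OF m that]
      by (intro exI[of _ "-1"]) (simp add: of_nat_diff)
    then have "chi (int (m - a)) = chi ((-1) * int a)" by (rule dirichlet_char_cong[OF chi])
    also have "\<dots> = chi (int a)" using even by (simp only: dirichlet_char_mult[OF chi]) simp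
    finally show ?thesis .
  qed
  then have "X = (\<Sum>a\<in>units_mod m. - (complex_of_real (Scirc b m S a) * cnj (chi (int a))))"
    unfolding X_def
    by (subst sum.reindex_bij_betw[OF bij_betw_diff_units_mod[OF m], symmetric])
      (simp add: Scirc_reflect)
  then have "X = 0" unfolding X_def by (simp add: sum_negf)
  then show ?thesis by (simp add: Shat_def X_def)
qed

lemma Shat_inversion_odd:
  assumes r: "r \<in> units_mod m"
  shows "(\<Sum>chi | dirichlet_char m chi \<and> chi (-1) = -1. Shat b m S chi * chi (int r))
           = complex_of_real (Scirc b m S r)"
proof -
  have "(\<Sum>chi | dirichlet_char m chi \<and> chi (-1) = -1. Shat b m S chi * chi (int r))
          = (\<Sum>chi | dirichlet_char m chi. Shat b m S chi * chi (int r))"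
    using finite_dirichlet_chars m Shat_even_eq_0 dirichlet_char_minus_1
    by (intro sum.mono_neutral_left) auto
  also have "\<dots> = complex_of_real (Scirc b m S r)" by (rule Shat_inversion[OF m r])
  finally show ?thesis .
qed

lemma sum_odd_chars_Shat:
  "(\<Sum>chi | dirichlet_char m chi \<and> chi (-1) = -1. Shat b m S chi * chi (int p))
     = (if coprime p m then complex_of_real (Scirc b m S (p mod m)) else 0)"
proof (cases "coprime p m")
  case True
  then have "p mod m \<in> units_mod m" using m by (simp add: units_mod_def)
  then show ?thesis
    using Shat_inversion_odd[of "p mod m"] True by (simp add: dirichlet_char_nat_mod)
next
  case False
  then have "(\<Sum>chi | dirichlet_char m chi \<and> chi (-1) = -1. Shat b m S chi * chi (int p)) = 0"
    by (intro sum.neutral) (auto simp: dirichlet_char_eq_0_iff)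
  then show ?thesis using False by simp
qed

end


section \<open>Summation over primes\<close>

lemma has_sum_sum:
  fixes f :: "'i \<Rightarrow> 'a \<Rightarrow> 'b::topological_comm_monoid_add"
  assumes "finite I" "\<And>i. i \<in> I \<Longrightarrow> (f i has_sum s i) A"
  shows "((\<lambda>x. \<Sum>i\<in>I. f i x) has_sum (\<Sum>i\<in>I. s i)) A"
  using assms by (induction I rule: finite_induct) (auto intro: has_sum_add)

lemma norm_of_nat_powr: "norm (of_nat n powr s :: complex) = real n powr Re s"
  using norm_powr_real_powr[of "of_nat n" s] by simp

lemma summable_on_dirichlet_char_powr:
  assumes chi: "dirichlet_char m chi" and m: "m > 0" and s: "Re s > 1"
  shows "(\<lambda>n. chi (int n) * of_nat n powr - s) summable_on A"
proof -
  have "summable (\<lambda>n. real n powr - Re s)" using s by (simp add: summable_real_powr_iff)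
  moreover have "norm (norm (chi (int n) * of_nat n powr - s)) \<le> real n powr - Re s" for n
  proof -
    have "norm (norm (chi (int n) * of_nat n powr - s)) = norm (chi (int n)) * real n powr - Re s"
      by (simp add: norm_mult norm_of_nat_powr)
    also have "\<dots> \<le> real n powr - Re s"
      using norm_dirichlet_char_le_1[OF chi m] by (intro mult_left_le_one_le) auto
    finally show ?thesis .
  qed
  ultimately have "summable (\<lambda>n. norm (chi (int n) * of_nat n powr - s))"
    by (rule summable_comparison_test')
  then show ?thesis by (rule summable_on_subset[OF norm_summable_imp_summable_on]) simp
qed

lemma has_sum_Pchi_combination:
  assumes m: "m > 0" and s: "Re s > 1"
    and D: "finite D" "\<And>chi. chi \<in> D \<Longrightarrow> dirichlet_char m chi"
  shows "((\<lambda>p. (\<Sum>chi\<in>D. w chi * chi (int p)) * of_nat p powr - s)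
           has_sum (\<Sum>chi\<in>D. w chi * Pchi s chi)) {p. prime p}"
proof -
  have "((\<lambda>p. w chi * (chi (int p) * of_nat p powr - s)) has_sum (w chi * Pchi s chi))
          {p. prime p}" if "chi \<in> D" for chi
    using summable_on_dirichlet_char_powr[OF D(2)[OF that] m s] unfolding Pchi_def
    by (intro has_sum_cmult_right has_sum_infsum)
  then have "((\<lambda>p. \<Sum>chi\<in>D. w chi * (chi (int p) * of_nat p powr - s))
               has_sum (\<Sum>chi\<in>D. w chi * Pchi s chi)) {p. prime p}"
    by (rule has_sum_sum[OF D(1)])
  then show ?thesis by (simp add: sum_distrib_right mult.assoc)
qed

lemma has_sum_primes_coprime_split:
  fixes f g :: "nat \<Rightarrow> complex"
  assumes g: "(g has_sum x) {p. prime p}"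
    and g_eq: "\<And>p. prime p \<Longrightarrow> g p = (if coprime p b then f p else 0)"
  shows "infsum f {p. prime p \<and> p > m \<and> coprime p b}
           + (\<Sum>p | prime p \<and> p \<le> m \<and> \<not> p dvd b. f p) = x"
proof -
  define A where "A = {p. prime p \<and> p > m \<and> coprime p b}"
  define B where "B = {p. prime p \<and> p \<le> m \<and> \<not> p dvd b}"
  have B_coprime: "B = {p. prime p \<and> p \<le> m \<and> coprime p b}"
    by (auto simp: B_def prime_imp_coprime dest: coprime_common_divisor)
  have g_summable: "g summable_on {p. prime p}" using g by (auto simp: summable_on_def)
  have "x = infsum g {p. prime p}" using g by (simp add: infsumI)
  also have "\<dots> = infsum g (A \<union> B)"
    by (rule infsum_cong_neutral) (auto simp: A_def B_coprime g_eq not_less)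
  also have "\<dots> = infsum g A + infsum g B"
    by (intro infsum_Un_disjoint summable_on_subset[OF g_summable]) (auto simp: A_def B_def)
  also have "infsum g A = infsum f A" by (rule infsum_cong) (simp add: A_def g_eq)
  also have "infsum g B = sum f B"
  proof -
    have "finite B" by (rule finite_subset[of _ "{..m}"]) (auto simp: B_def)
    then have "infsum g B = sum g B" by simp
    also have "\<dots> = sum f B" by (rule sum.cong) (auto simp: B_coprime g_eq)
    finally show ?thesis .
  qed
  finally show ?thesis by (simp add: A_def B_def)
qed

theorem mainTheorem8:
  fixes b l m :: nat and S :: "nat \<Rightarrow> real" and s :: complex
  assumes hb: "b \<ge> 2" and hl: "l \<ge> 1" and hm: "m = b ^ (l + 1)"
    and reflection: "\<And>a. a \<in> units_mod m \<Longrightarrow> S a + S (m - a) = -1"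
    and hs: "Re s > 1"
  shows "Fcirc b m S s
           + (\<Sum>p\<in>{p. prime p \<and> p \<le> m \<and> \<not> p dvd b}.
                complex_of_real (Scirc b m S (p mod m)) * of_nat p powr (- s))
         = (\<Sum>chi\<in>{chi. dirichlet_char m chi \<and> chi (-1) = -1}. Shat b m S chi * Pchi s chi)
       \<and> (\<forall>chi. dirichlet_char m chi \<and> chi (-1) = -1 \<longrightarrow> chi \<noteq> principal_char m)"
proof
  let ?odd = "{chi. dirichlet_char m chi \<and> chi (-1) = -1}"
  have m: "m > 1" unfolding hm using hb by (intro one_less_power) auto
  have coprime_m: "coprime p m \<longleftrightarrow> coprime p b" for p by (auto simp: hm)
  have "((\<lambda>p. (\<Sum>chi\<in>?odd. Shat b m S chi * chi (int p)) * of_nat p powr - s)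
          has_sum (\<Sum>chi\<in>?odd. Shat b m S chi * Pchi s chi)) {p. prime p}"
    using m hs finite_subset[OF _ finite_dirichlet_chars[of m]]
    by (intro has_sum_Pchi_combination[of m]) auto
  then show "Fcirc b m S s
           + (\<Sum>p\<in>{p. prime p \<and> p \<le> m \<and> \<not> p dvd b}.
                complex_of_real (Scirc b m S (p mod m)) * of_nat p powr (- s))
         = (\<Sum>chi\<in>?odd. Shat b m S chi * Pchi s chi)"
    unfolding Fcirc_def by (rule has_sum_primes_coprime_split)
      (simp add: sum_odd_chars_Shat[where b = b and m = m and S = S, OF m reflection] coprime_m)
next
  show "\<forall>chi. dirichlet_char m chi \<and> chi (-1) = -1 \<longrightarrow> chi \<noteq> principal_char m"
    by (auto simp: principal_char_def)
qed

end
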